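(* Let $\Gamma=(V,E)$ be a locally finite reflexive graph with $V\neq\emptyset$, and let $k$ be a nonnegative integer with $k\le\kappa_1(\Gamma)$. Let $X$ be a finite subset of $V$ with $\min(|V\setminus X|,|X|)\ge k$. Then there exist pairwise distinct $x_1,\dots,x_k\in X$ and pairwise distinct $y_1,\dots,y_k\in V\setminus X$ such that $(x_i,y_i)\in E$ for all $1\le i\le k$.
   Context: A graph is a pair $\Gamma=(V,E)$ with $E\subseteq V\times V$; reflexive means $(x,x)\in E$ for all $x$; locally finite means each $\Gamma(x)=\{y:(x,y)\in E\}$ is finite. $\Gamma(A)=\bigcup_{x\in A}\Gamma(x)$, $\partial(A)=\Gamma(A)\setminus A$. If there is a finite nonempty $X$ with $\Gamma(X)\neq V$, then $\kappa_1(\Gamma)=\min\{|\partial(X)|: X \text{ finite nonempty}, \Gamma(X)\ne V\}$; otherwise ($V$ finite) $\kappa_1(\Gamma)=|V|-1$ by convention. *)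

theory Defs
  imports Main
begin

definition graph :: "'a set \<Rightarrow> ('a \<times> 'a) set \<Rightarrow> bool" where
  "graph V E \<longleftrightarrow> E \<subseteq> V \<times> V"

definition reflexive_graph :: "'a set \<Rightarrow> ('a \<times> 'a) set \<Rightarrow> bool" where
  "reflexive_graph V E \<longleftrightarrow> (\<forall>x\<in>V. (x, x) \<in> E)"

definition nbhd :: "('a \<times> 'a) set \<Rightarrow> 'a \<Rightarrow> 'a set" where
  "nbhd E x = {y. (x, y) \<in> E}"

definition locally_finite :: "'a set \<Rightarrow> ('a \<times> 'a) set \<Rightarrow> bool" where
  "locally_finite V E \<longleftrightarrow> (\<forall>x\<in>V. finite (nbhd E x))"

definition nbhd_set :: "('a \<times> 'a) set \<Rightarrow> 'a set \<Rightarrow> 'a set" where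
  "nbhd_set E A = (\<Union>x\<in>A. nbhd E x)"

definition boundary :: "('a \<times> 'a) set \<Rightarrow> 'a set \<Rightarrow> 'a set" where
  "boundary E A = nbhd_set E A - A"

definition kappa1_admissible :: "'a set \<Rightarrow> ('a \<times> 'a) set \<Rightarrow> 'a set \<Rightarrow> bool" where
  "kappa1_admissible V E X \<longleftrightarrow> finite X \<and> X \<noteq> {} \<and> X \<subseteq> V \<and> nbhd_set E X \<noteq> V"

definition kappa1 :: "'a set \<Rightarrow> ('a \<times> 'a) set \<Rightarrow> nat" where
  "kappa1 V E =
     (if \<exists>X. kappa1_admissible V E X
      then (LEAST n. \<exists>X. kappa1_admissible V E X \<and> n = card (boundary E X))
      else card V - 1)"

end

theory Submission
  imports Defs
begin

(* By the definition of kappa_1,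
   every nonempty S \<subseteq> X either has a boundary of size at least kappa_1 \<ge> k or
   satisfies Gamma(S) = V; in both cases the outside neighbourhood of S grows
   enough that  |S| \<le> |Gamma(S) - X| + (|X| - k).  This is the hypothesis of
   the deficiency version of Hall's marriage theorem (Koenig-Ore) with defect
   d = |X| - k, which yields a matching covering at least k vertices of X. *)

section \<open>Hall's marriage theorem\<close>

definition hall_condition :: "'a set \<Rightarrow> ('a \<Rightarrow> 'b set) \<Rightarrow> bool" where
  "hall_condition A N \<longleftrightarrow> (\<forall>S\<subseteq>A. card S \<le> card (\<Union>(N ` S)))"

definition is_sdr :: "('a \<Rightarrow> 'b) \<Rightarrow> 'a set \<Rightarrow> ('a \<Rightarrow> 'b set) \<Rightarrow> bool" where
  "is_sdr f A N \<longleftrightarrow> inj_on f A \<and> (\<forall>x\<in>A. f x \<in> N x)"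

lemma hall_condition_remove_critical:
  assumes "finite A" "\<And>x. x \<in> A \<Longrightarrow> finite (N x)" "hall_condition A N"
    and "S \<subseteq> A" "card (\<Union>(N ` S)) = card S"
  shows "hall_condition (A - S) (\<lambda>x. N x - \<Union>(N ` S))"
  unfolding hall_condition_def
proof (intro allI impI)
  fix T assume T: "T \<subseteq> A - S"
  let ?M = "\<Union>(N ` S)" and ?R = "\<Union>x\<in>T. N x - \<Union>(N ` S)"
  have TS: "T \<union> S \<subseteq> A" using T assms(4) by blast
  then have "finite T" "finite S" using assms(1) finite_subset by blast+
  have cover: "\<Union>(N ` (T \<union> S)) = ?R \<union> ?M" by blast
  have "finite (\<Union>(N ` (T \<union> S)))" using TS assms(1,2) finite_subset by blast
  then have fin: "finite ?M" "finite ?R" unfolding cover by simp_all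
  have "card T + card S = card (T \<union> S)"
    using T \<open>finite T\<close> \<open>finite S\<close> by (subst card_Un_disjoint) auto
  also have "\<dots> \<le> card (\<Union>(N ` (T \<union> S)))"
    using assms(3) TS unfolding hall_condition_def by blast
  also have "\<dots> = card ?R + card ?M"
    unfolding cover using fin by (subst card_Un_disjoint) auto
  finally show "card T \<le> card ?R" using assms(5) by simp
qed

(* If no nonempty proper subfamily is critical, Hall's condition holds with
   slack one for them, so any index a may be matched to any b \<in> N a: the
   remaining indices still satisfy Hall's condition without b. *)
lemma hall_condition_remove_edge:
  assumes "finite A" "\<And>x. x \<in> A \<Longrightarrow> finite (N x)" "hall_condition A N"
    and no_critical: "\<And>S. S \<subseteq> A \<Longrightarrow> S \<noteq> {} \<Longrightarrow> S \<noteq> A \<Longrightarrow> card (\<Union>(N ` S)) \<noteq> card S"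
    and "a \<in> A"
  shows "hall_condition (A - {a}) (\<lambda>x. N x - {b})"
  unfolding hall_condition_def
proof (intro allI impI)
  fix T assume T: "T \<subseteq> A - {a}"
  show "card T \<le> card (\<Union>x\<in>T. N x - {b})"
  proof (cases "T = {}")
    case False
    have "T \<subseteq> A" "T \<noteq> A" using T \<open>a \<in> A\<close> by blast+
    then have "card T \<le> card (\<Union>(N ` T))" "card (\<Union>(N ` T)) \<noteq> card T"
      using assms(3) no_critical False unfolding hall_condition_def by blast+
    moreover have "finite (\<Union>(N ` T))" using \<open>T \<subseteq> A\<close> assms(1,2) finite_subset by blast
    moreover have "(\<Union>x\<in>T. N x - {b}) = \<Union>(N ` T) - {b}" by auto
    ultimately show ?thesis by (auto simp: card_Diff_singleton_if)
  qed simp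
qed

lemma is_sdr_glue:
  assumes g: "is_sdr g S N" and h: "is_sdr h (A - S) (\<lambda>x. N x - \<Union>(N ` S))"
    and "S \<subseteq> A"
  shows "is_sdr (\<lambda>x. if x \<in> S then g x else h x) A N"
proof -
  let ?f = "\<lambda>x. if x \<in> S then g x else h x"
  have "inj_on ?f S" using inj_on_cong[of S ?f g] g unfolding is_sdr_def by simp
  moreover have "inj_on ?f (A - S)" using inj_on_cong[of "A - S" ?f h] h unfolding is_sdr_def by simp
  moreover have "?f ` S \<subseteq> \<Union>(N ` S)" using g unfolding is_sdr_def by auto
  moreover have "?f ` (A - S) \<inter> \<Union>(N ` S) = {}" using h unfolding is_sdr_def by auto
  ultimately have "inj_on ?f (S \<union> (A - S))" unfolding inj_on_Un by blast
  moreover have "S \<union> (A - S) = A" using \<open>S \<subseteq> A\<close> by blast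
  ultimately show ?thesis using g h unfolding is_sdr_def by auto
qed

lemma is_sdr_extend:
  assumes "is_sdr h (A - {a}) (\<lambda>x. N x - {b})" "a \<in> A" "b \<in> N a"
  shows "is_sdr (h(a := b)) A N"
proof -
  have "inj_on (h(a := b)) (insert a (A - {a}))"
    using assms(1) unfolding is_sdr_def inj_on_def by auto
  then show ?thesis using assms unfolding is_sdr_def by (auto simp: insert_absorb)
qed

(* Hall's marriage theorem for finite families of finite sets, by strong
   induction on |A|: split at a critical subfamily if there is one, otherwise
   match an arbitrary index and recurse. *)
theorem hall_marriage:
  assumes "finite A" "\<And>x. x \<in> A \<Longrightarrow> finite (N x)" "hall_condition A N"
  shows "\<exists>f. is_sdr f A N"
  using assms
proof (induction "card A" arbitrary: A N rule: less_induct)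
  case less
  have IH: "\<exists>f. is_sdr f B M"
    if "B \<subseteq> A" "card B < card A" "hall_condition B M" "\<And>x. x \<in> B \<Longrightarrow> M x \<subseteq> N x"
    for B and M :: "'a \<Rightarrow> 'b set"
  proof (rule less.hyps[OF that(2) _ _ that(3)])
    show "finite B" using that(1) less.prems(1) by (rule finite_subset)
    show "finite (M x)" if "x \<in> B" for x
      using that \<open>B \<subseteq> A\<close> less.prems(2) \<open>\<And>x. x \<in> B \<Longrightarrow> M x \<subseteq> N x\<close>
      by (meson finite_subset subsetD)
  qed
  show ?case
  proof (cases "\<exists>S. S \<subseteq> A \<and> S \<noteq> {} \<and> S \<noteq> A \<and> card (\<Union>(N ` S)) = card S")
    case True
    then obtain S where S: "S \<subseteq> A" "S \<noteq> {}" "S \<noteq> A" "card (\<Union>(N ` S)) = card S"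
      by blast
    have "card S < card A" using S(1,3) less.prems(1) by (simp add: psubset_card_mono)
    moreover have "hall_condition S N"
      using less.prems(3) S(1) unfolding hall_condition_def by auto
    ultimately obtain g where g: "is_sdr g S N" using IH[OF S(1)] by auto
    have "card (A - S) < card A" using S(1,2) less.prems(1) by (intro psubset_card_mono) auto
    moreover have "hall_condition (A - S) (\<lambda>x. N x - \<Union>(N ` S))"
      using hall_condition_remove_critical[OF less.prems S(1,4)] .
    ultimately obtain h where h: "is_sdr h (A - S) (\<lambda>x. N x - \<Union>(N ` S))"
      using IH[of "A - S"] by auto
    show ?thesis using is_sdr_glue[OF g h S(1)] by blast
  next
    case no_critical: False
    show ?thesis
    proof (cases "A = {}")
      case True then show ?thesis by (simp add: is_sdr_def)
    next
      case False
      then obtain a where a: "a \<in> A" by blast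
      have "card {a} \<le> card (\<Union>(N ` {a}))"
        using less.prems(3) a unfolding hall_condition_def by blast
      then have "0 < card (N a)" by simp
      then have "N a \<noteq> {}" by (simp add: card_gt_0_iff)
      then obtain b where b: "b \<in> N a" by blast
      have "card (A - {a}) < card A" using a less.prems(1) by (rule card_Diff1_less[rotated])
      moreover have "hall_condition (A - {a}) (\<lambda>x. N x - {b})"
        by (rule hall_condition_remove_edge[OF less.prems _ a]) (use no_critical in auto)
      ultimately obtain h where h: "is_sdr h (A - {a}) (\<lambda>x. N x - {b})"
        using IH[of "A - {a}"] by auto
      show ?thesis using is_sdr_extend[OF h a b] by blast
    qed
  qed
qed

lemma hall_condition_add_dummies:
  fixes N :: "'a \<Rightarrow> 'b set"
  assumes "finite A" "\<And>x. x \<in> A \<Longrightarrow> finite (N x)"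
    and deficiency: "\<And>S. S \<subseteq> A \<Longrightarrow> card S \<le> card (\<Union>(N ` S)) + d"
  shows "hall_condition A (\<lambda>x. Inl ` N x \<union> Inr ` {..<d})"
  unfolding hall_condition_def
proof (intro allI impI)
  fix S assume S: "S \<subseteq> A"
  show "card S \<le> card (\<Union>x\<in>S. Inl ` N x \<union> Inr ` {..<d})"
  proof (cases "S = {}")
    case False
    have "finite (\<Union>(N ` S))" using S assms(1,2) finite_subset by blast
    moreover have "(\<Union>x\<in>S. Inl ` N x \<union> Inr ` {..<d}) = Inl ` \<Union>(N ` S) \<union> Inr ` {..<d}"
      using False by auto
    ultimately have "card (\<Union>x\<in>S. Inl ` N x \<union> Inr ` {..<d}) = card (\<Union>(N ` S)) + d"
      by (simp only:) (subst card_Un_disjoint, auto simp: card_image)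
    then show ?thesis using deficiency[OF S] by simp
  qed simp
qed

(* Conversely, in a representative system for the enlarged family at most d
   indices receive dummies; the others keep a genuine representative. *)
lemma is_sdr_drop_dummies:
  assumes "finite A" and f: "is_sdr f A (\<lambda>x. Inl ` N x \<union> Inr ` {..<d})"
  defines "B \<equiv> {x \<in> A. f x \<in> range Inl}"
  shows "card A \<le> card B + d" and "is_sdr (projl \<circ> f) B N"
proof -
  have "B \<subseteq> A" unfolding B_def by blast
  have "inj_on f (A - B)" using f unfolding is_sdr_def by (auto intro: inj_on_subset)
  then have "card (A - B) = card (f ` (A - B))" by (simp add: card_image)
  also have "\<dots> \<le> card (Inr ` {..<d} :: ('b + nat) set)"
    using f unfolding B_def is_sdr_def by (intro card_mono) auto
  also have "\<dots> = d" by (simp add: card_image)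
  finally show "card A \<le> card B + d"
    using assms(1) \<open>B \<subseteq> A\<close> card_Diff_subset[of B A] card_mono[of A B]
    by (simp add: finite_subset)
  have inj: "inj_on f B" using f \<open>B \<subseteq> A\<close> unfolding is_sdr_def by (blast intro: inj_on_subset)
  have Inl: "f x = Inl (projl (f x))" if "x \<in> B" for x using that unfolding B_def by auto
  have "inj_on (projl \<circ> f) B"
  proof (rule inj_onI)
    fix x y assume xy: "x \<in> B" "y \<in> B" "(projl \<circ> f) x = (projl \<circ> f) y"
    then have "f x = f y" using Inl[OF xy(1)] Inl[OF xy(2)] by (metis comp_apply)
    then show "x = y" using inj_onD[OF inj] xy(1,2) by blast
  qed
  moreover have "(projl \<circ> f) x \<in> N x" if "x \<in> B" for x
  proof -
    obtain y where "f x = Inl y" and "f x \<in> Inl ` N x \<union> Inr ` {..<d}"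
      using f \<open>x \<in> B\<close> unfolding B_def is_sdr_def by auto
    then show ?thesis by auto
  qed
  ultimately show "is_sdr (projl \<circ> f) B N" unfolding is_sdr_def by blast
qed

theorem hall_deficiency:
  fixes N :: "'a \<Rightarrow> 'b set"
  assumes "finite A" "\<And>x. x \<in> A \<Longrightarrow> finite (N x)"
    and "\<And>S. S \<subseteq> A \<Longrightarrow> card S \<le> card (\<Union>(N ` S)) + d"
  shows "\<exists>B f. B \<subseteq> A \<and> card A \<le> card B + d \<and> is_sdr f B N"
proof -
  have hall: "hall_condition A (\<lambda>x. Inl ` N x \<union> Inr ` {..<d})"
    using hall_condition_add_dummies[OF assms] .
  have fin: "finite (Inl ` N x \<union> Inr ` {..<d})" if "x \<in> A" for x
    using assms(2)[OF that] by simp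
  obtain f where f: "is_sdr f A (\<lambda>x. Inl ` N x \<union> Inr ` {..<d})"
    using hall_marriage[OF assms(1) fin hall] by blast
  have "{x \<in> A. f x \<in> range Inl} \<subseteq> A" by blast
  with is_sdr_drop_dummies[OF assms(1) f] show ?thesis by blast
qed

section \<open>Expansion of finite vertex sets\<close>

lemma finite_nbhd_set:
  assumes "locally_finite V E" "finite S" "S \<subseteq> V"
  shows "finite (nbhd_set E S)"
  using assms unfolding locally_finite_def nbhd_set_def by blast

lemma kappa1_le_boundary:
  assumes "kappa1_admissible V E S"
  shows "kappa1 V E \<le> card (boundary E S)"
proof -
  have "kappa1 V E = (LEAST n. \<exists>X. kappa1_admissible V E X \<and> n = card (boundary E X))"
    using assms unfolding kappa1_def by auto
  also have "\<dots> \<le> card (boundary E S)" by (rule Least_le) (use assms in blast)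
  finally show ?thesis .
qed

(* If Gamma(S) \<noteq> V this follows from the boundary bound,
   since the boundary of S lies in (Gamma(S) - X) \<union> (X - S); if Gamma(S) = V,
   the complement V - X is finite and has at least k elements. *)
lemma kappa1_outer_expansion:
  assumes "locally_finite V E" "k \<le> kappa1 V E" "finite X" "X \<subseteq> V"
    and "card X \<ge> k" "infinite (V - X) \<or> card (V - X) \<ge> k"
    and "S \<subseteq> X"
  shows "card S + k \<le> card (nbhd_set E S - X) + card X"
proof -
  have "finite S" using assms(3,7) by (rule finite_subset[rotated])
  have fin_nbhd: "finite (nbhd_set E S)"
    using finite_nbhd_set assms(1,4,7) \<open>finite S\<close> by blast
  have split_X: "card (X - S) + card S = card X"
    using assms(3,7) by (metis card_Diff_subset card_mono le_add_diff_inverse2 finite_subset)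
  consider "S = {}" | "nbhd_set E S = V" | "kappa1_admissible V E S"
    using \<open>finite S\<close> assms(4,7) unfolding kappa1_admissible_def by blast
  then show ?thesis
  proof cases
    case 1
    then show ?thesis using assms(5) by simp
  next
    case 2
    then have "k \<le> card (nbhd_set E S - X)" using fin_nbhd assms(6) by auto
    then show ?thesis using split_X by linarith
  next
    case 3
    have "k \<le> card (boundary E S)" using kappa1_le_boundary[OF 3] assms(2) by linarith
    also have "\<dots> \<le> card ((nbhd_set E S - X) \<union> (X - S))"
      using fin_nbhd assms(3) unfolding boundary_def by (intro card_mono) auto
    also have "\<dots> \<le> card (nbhd_set E S - X) + card (X - S)" by (rule card_Un_le)
    finally show ?thesis using split_X by linarith
  qed
qed

lemma is_sdr_enumerate:
  assumes "finite B" "k \<le> card B" "is_sdr f B N"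
  shows "\<exists>x. inj_on x {1..k} \<and> inj_on (f \<circ> x) {1..k} \<and> (\<forall>i\<in>{1..k}. x i \<in> B \<and> f (x i) \<in> N (x i))"
proof -
  obtain C where C: "C \<subseteq> B" "card C = k" using assms(2) by (rule obtain_subset_with_card_n)
  then obtain x where "bij_betw x {1..k} C"
    using ex_bij_betw_nat_finite_1[of C] finite_subset[OF C(1) assms(1)] by auto
  then have x: "inj_on x {1..k}" "x ` {1..k} \<subseteq> B" using C(1) unfolding bij_betw_def by auto
  have "inj_on f (x ` {1..k})" using assms(3) x(2) unfolding is_sdr_def by (blast intro: inj_on_subset)
  then have "inj_on (f \<circ> x) {1..k}" using x(1) by (rule comp_inj_on[rotated])
  moreover have "\<forall>i\<in>{1..k}. x i \<in> B \<and> f (x i) \<in> N (x i)"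
    using assms(3) x(2) unfolding is_sdr_def by blast
  ultimately show ?thesis using x(1) by blast
qed

theorem mainTheorem19:
  fixes V :: "'a set" and E :: "('a \<times> 'a) set" and k :: nat and X :: "'a set"
  assumes "graph V E" and "reflexive_graph V E" and "locally_finite V E"
    and "V \<noteq> {}"
    and "k \<le> kappa1 V E"
    and "finite X" and "X \<subseteq> V"
    and "card X \<ge> k" and "infinite (V - X) \<or> card (V - X) \<ge> k"
  shows "\<exists>x y :: nat \<Rightarrow> 'a. inj_on x {1..k} \<and> inj_on y {1..k} \<and>
           (\<forall>i\<in>{1..k}. x i \<in> X \<and> y i \<in> V - X \<and> (x i, y i) \<in> E)"
proof -
  let ?N = "\<lambda>x. nbhd E x - X"
  have deficiency: "card S \<le> card (\<Union>(?N ` S)) + (card X - k)" if "S \<subseteq> X" for S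
  proof -
    have outside: "\<Union>(?N ` S) = nbhd_set E S - X" unfolding nbhd_set_def by blast
    show ?thesis unfolding outside
      using kappa1_outer_expansion[OF assms(3,5,6,7,8,9) that] assms(8) by linarith
  qed
  have finite_N: "finite (?N x)" if "x \<in> X" for x
    using assms(3,7) that unfolding locally_finite_def by blast
  obtain B f where B: "B \<subseteq> X" "card X \<le> card B + (card X - k)" "is_sdr f B ?N"
    using hall_deficiency[OF assms(6) finite_N deficiency] by blast
  then have "finite B" "k \<le> card B" using assms(6,8) finite_subset by (blast, linarith)
  then obtain x where x: "inj_on x {1..k}" "inj_on (f \<circ> x) {1..k}"
    "\<forall>i\<in>{1..k}. x i \<in> B \<and> f (x i) \<in> ?N (x i)"
    using is_sdr_enumerate[OF _ _ B(3)] by blast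
  have "x i \<in> X \<and> (f \<circ> x) i \<in> V - X \<and> (x i, (f \<circ> x) i) \<in> E" if "i \<in> {1..k}" for i
    using x(3) that B(1) assms(1) unfolding graph_def nbhd_def by auto
  then show ?thesis using x(1,2) by blast
qed

end
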